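(* Let $p\in\mathbb{N}$ and $f(z)=\exp\{z_1+\dots+z_p\}=\sum_{n\in\mathbb{Z}_+^p}\frac{z^n}{n_1!\cdots n_p!}$. Let $(\omega_n)_{n\in\mathbb{Z}_+^p}$ be independent random variables on the Steinhaus probability space, each uniformly distributed on $[0,1]$, and consider the random entire function $f(z,t)=\sum_{n}\frac{e^{2\pi i\omega_n(t)}}{n_1!\cdots n_p!}z^n$, with $M_f(r,t)=\max\{|f(z,t)|\colon|z_1|=r_1,\dots,|z_p|=r_p\}$. Then for every $\varepsilon>0$, for $P$-almost every $t\in[0,1]$ there is a measurable set $E(\varepsilon)=E(\varepsilon,t)\subset\mathbb{R}_+^p$ such that $E(\varepsilon)\cap B(R)$ has infinite logarithmic measure for every $R\in\mathbb{R}_+^p$, and $$M_f(r,t)\ge\mu_f(r)(\ln\mu_f(r))^{p/4-\varepsilon}\quad\text{for all } r\in E(\varepsilon).$$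
   Context: For $r\in\mathbb{R}_+^p$: $r^n=r_1^{n_1}\cdots r_p^{n_p}$, $\mu_f(r)=\max\{|a_n|r^n\colon n\in\mathbb{Z}_+^p\}$ where $a_n$ are the Taylor coefficients of $f$ (here $a_n=1/(n_1!\cdots n_p!)$), $B(R)=\{r\in\mathbb{R}_+^p\colon r_j\ge R_j,\ j=1,\dots,p\}$. A measurable set $E$ has infinite logarithmic measure if $\int\cdots\int_E\prod_{j=1}^p\frac{dr_j}{r_j}=+\infty$. The Steinhaus probability space is $[0,1]$ with Lebesgue measurable sets and Lebesgue measure $P$. *)

theory Defs
  imports "HOL-Probability.Probability"
begin

abbreviation steinhaus :: "real measure" where
  "steinhaus \<equiv> lebesgue_on {0..1}"

text \<open>Multi-indices n in Z_+^p are vectors nat^'p; p = CARD('p).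
  Coefficients a_n = 1/(n_1! ... n_p!), r^n = prod r_j^n_j.\<close>
definition coef :: "nat^'p::finite \<Rightarrow> real" where
  "coef n = 1 / (\<Prod>j\<in>UNIV. fact (n $ j))"

definition mpow :: "'a::comm_monoid_mult ^'p::finite \<Rightarrow> nat^'p \<Rightarrow> 'a" where
  "mpow z n = (\<Prod>j\<in>UNIV. (z $ j) ^ (n $ j))"

definition max_term :: "real^'p::finite \<Rightarrow> real" where
  "max_term r = (SUP n. \<bar>coef n\<bar> * mpow r n)"

definition rand_f :: "(nat^'p::finite \<Rightarrow> real \<Rightarrow> real) \<Rightarrow> complex^'p \<Rightarrow> real \<Rightarrow> complex" where
  "rand_f \<omega> z t = (\<Sum>\<^sub>\<infinity> n. exp (2 * pi * \<i> * complex_of_real (\<omega> n t)) * complex_of_real (coef n) * mpow z n)"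

definition max_mod :: "(nat^'p::finite \<Rightarrow> real \<Rightarrow> real) \<Rightarrow> real^'p \<Rightarrow> real \<Rightarrow> real" where
  "max_mod \<omega> r t = (SUP z\<in>{z. \<forall>j. norm (z $ j) = r $ j}. norm (rand_f \<omega> z t))"

definition Bset :: "real^'p::finite \<Rightarrow> (real^'p) set" where
  "Bset R = {r. \<forall>j. R $ j \<le> r $ j}"

definition log_measure :: "(real^'p::finite) set \<Rightarrow> ennreal" where
  "log_measure E = (\<integral>\<^sup>+ r. indicator E r * ennreal (\<Prod>j\<in>UNIV. 1 / (r $ j)) \<partial>lebesgue)"

end

theory Submission
  imports Defs
begin

text \<open>
  The bound in fact holds for every t, not only almost surely: whatever the phases are, the
  maximum modulus on the torus |z_j| = r_j dominates the l2-norm of the coefficients, M_f(r,t) \<ge>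
  (\<Sum> |a_n|^2 r^{2n})^{1/2} (a discrete Parseval identity on a grid of roots of unity, plus a
  tail estimate for the absolutely convergent series).  For r in a dyadic shell 2^k < r_j < 2^{k+1}
  each factor r_j^m/m! stays within a factor e of its maximum for the roughly \<surd>(2^k) indices m
  right above \<lfloor>r_j\<rfloor>; this window contains about 2^{kp/2} indices, which gives
  M_f(r,t) \<ge> c 2^{kp/4} \<mu>_f(r), while ln \<mu>_f(r) \<le> 2p 2^k.  Hence the claimed inequality holds on the
  union E of all dyadic shells beyond some level K, and E meets every B(R) in a set of infinite
  logarithmic measure, since each shell has logarithmic measure at least 2^{-p}.
\<close>


section \<open>Boxes of multi-indices\<close>

definition vbox :: "('p::finite \<Rightarrow> nat set) \<Rightarrow> (nat^'p) set" where
  "vbox B = {n. \<forall>j. n$j \<in> B j}"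

abbreviation Nbox :: "nat \<Rightarrow> (nat^'p::finite) set" where
  "Nbox N \<equiv> vbox (\<lambda>_. {..<N})"

lemma vbox_image: "vbox B = vec_lambda ` (PiE UNIV B)"
proof -
  have "n \<in> vec_lambda ` (PiE UNIV B)" if "n \<in> vbox B" for n
    using that unfolding vbox_def by (intro image_eqI[of _ _ "vec_nth n"]) auto
  moreover have "vec_lambda g \<in> vbox B" if "g \<in> PiE UNIV B" for g
    using that unfolding vbox_def by auto
  ultimately show ?thesis by blast
qed

lemma finite_vbox: "(\<And>j. finite (B j)) \<Longrightarrow> finite (vbox B)"
  unfolding vbox_image by (intro finite_imageI finite_PiE) auto

lemma sum_vbox_prod:
  fixes f :: "'p::finite \<Rightarrow> nat \<Rightarrow> 'c::comm_semiring_1"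
  assumes "\<And>j. finite (B j)"
  shows "(\<Sum>n\<in>vbox B. \<Prod>j\<in>UNIV. f j (n$j)) = (\<Prod>j\<in>UNIV. \<Sum>k\<in>B j. f j k)"
proof -
  have inj: "inj_on vec_lambda (PiE UNIV B)"
    by (auto intro!: inj_onI simp: vec_lambda_inject)
  have "(\<Sum>n\<in>vbox B. \<Prod>j\<in>UNIV. f j (n$j)) = (\<Sum>g\<in>PiE UNIV B. \<Prod>j\<in>UNIV. f j (g j))"
    unfolding vbox_image by (subst sum.reindex[OF inj]) simp
  also have "\<dots> = (\<Prod>j\<in>UNIV. \<Sum>k\<in>B j. f j k)"
    by (rule prod_sum_PiE[symmetric]) (use assms in auto)
  finally show ?thesis .
qed

lemma card_vbox: "(\<And>j. finite (B j)) \<Longrightarrow> card (vbox B) = (\<Prod>j\<in>UNIV. card (B j))"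
  using sum_vbox_prod[of B "\<lambda>_ _. 1::nat"] by simp

lemma finite_subset_Nbox:
  assumes "finite H"
  shows "H \<subseteq> Nbox (Suc (\<Sum>n\<in>H. \<Sum>j\<in>UNIV. n$j))"
proof
  fix n assume n: "n \<in> H"
  have "n$j \<le> (\<Sum>n\<in>H. \<Sum>j\<in>UNIV. n$j)" for j
  proof -
    have "n$j \<le> (\<Sum>j\<in>UNIV. n$j)" by (rule member_le_sum) auto
    also have "\<dots> \<le> (\<Sum>n\<in>H. \<Sum>j\<in>UNIV. n$j)" using n assms by (intro member_le_sum) auto
    finally show ?thesis .
  qed
  then show "n \<in> Nbox (Suc (\<Sum>n\<in>H. \<Sum>j\<in>UNIV. n$j))"
    unfolding vbox_def by (simp add: less_Suc_eq_le)
qed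


section \<open>Discrete Fourier analysis on a grid\<close>

lemma sum_roots_of_unity:
  fixes d :: int and N :: nat
  assumes N: "N > 0" and d: "\<bar>d\<bar> < int N"
  shows "(\<Sum>k<N. cis (2*pi*real k * of_int d / real N)) = (if d = 0 then of_nat N else 0)"
proof (cases "d = 0")
  case True then show ?thesis by simp
next
  case False
  define u where "u = cis (2*pi* of_int d / real N)"
  have pw: "cis (2*pi*real k * of_int d / real N) = u ^ k" for k
  proof -
    have "cis (2*pi*real k * of_int d / real N) = cis (real k * (2*pi * of_int d / real N))"
      by (simp add: field_simps)
    then show ?thesis using Complex.DeMoivre[of "2*pi * of_int d / real N" k] by (simp add: u_def)
  qed
  have uN: "u ^ N = 1"
  proof -
    have "u ^ N = cis (real N * (2*pi * of_int d / real N))"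
      unfolding u_def by (rule Complex.DeMoivre)
    also have "real N * (2*pi * of_int d / real N) = 2 * pi * of_int d" using N by simp
    also have "cis (2 * pi * of_int d) = 1" by (rule cis_multiple_2pi) simp
    finally show ?thesis .
  qed
  have u1: "u \<noteq> 1"
  proof
    assume "u = 1"
    then have "exp (\<i> * complex_of_real (2*pi* of_int d / real N)) = 1"
      unfolding u_def cis_conv_exp by simp
    then obtain n :: int where n: "2*pi* of_int d / real N = of_int (2*n) * pi"
      unfolding exp_eq_1 by auto
    then have "of_int d = real N * of_int n" using N by (simp add: field_simps)
    then have dn: "d = int N * n" by (metis of_int_eq_iff of_int_mult of_int_of_nat_eq)
    with False have "\<bar>n\<bar> \<ge> 1" by auto
    then have "int N \<le> int N * \<bar>n\<bar>" by (simp add: mult_le_cancel_left1)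
    with dn d show False by (simp add: abs_mult)
  qed
  have "(\<Sum>k<N. cis (2*pi*real k * of_int d / real N)) = (\<Sum>k<N. u ^ k)"
    by (simp add: pw)
  also have "\<dots> = 0" using geometric_sum[OF u1, of N] uN by simp
  finally show ?thesis using False by simp
qed

definition grid_char :: "nat \<Rightarrow> nat^'p::finite \<Rightarrow> nat^'p \<Rightarrow> complex" where
  "grid_char N m n = (\<Prod>j\<in>UNIV. cis (2*pi*real (m$j)*real (n$j)/real N))"

lemma grid_char_orthogonal:
  fixes n n' :: "nat^'p::finite"
  assumes N: "N > 0" and n: "n \<in> Nbox N" and n': "n' \<in> Nbox N"
  shows "(\<Sum>m\<in>Nbox N. grid_char N m n * cnj (grid_char N m n'))
         = (if n = n' then complex_of_real (real N ^ CARD('p)) else 0)"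
proof -
  define d where "d j = int (n$j) - int (n'$j)" for j
  have d_lt: "\<bar>d j\<bar> < int N" for j
  proof -
    have "n$j < N" "n'$j < N" using n n' unfolding vbox_def by auto
    then show ?thesis unfolding d_def by linarith
  qed
  have char_quotient: "grid_char N m n * cnj (grid_char N m n')
        = (\<Prod>j\<in>UNIV. cis (2*pi*real (m$j) * of_int (d j)/real N))" for m
  proof -
    have "grid_char N m n * cnj (grid_char N m n')
        = (\<Prod>j\<in>UNIV. cis (2*pi*real (m$j)*real (n$j)/real N) * cis (- (2*pi*real (m$j)*real (n'$j)/real N)))"
      by (simp add: grid_char_def cis_cnj prod.distrib)
    also have "\<dots> = (\<Prod>j\<in>UNIV. cis (2*pi*real (m$j) * of_int (d j)/real N))"
      by (intro prod.cong refl) (simp add: cis_mult d_def algebra_simps diff_divide_distrib)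
    finally show ?thesis .
  qed
  have "(\<Sum>m\<in>Nbox N. grid_char N m n * cnj (grid_char N m n'))
      = (\<Prod>j\<in>UNIV. \<Sum>k\<in>{..<N}. cis (2*pi*real k * of_int (d j)/real N))"
    unfolding char_quotient by (rule sum_vbox_prod) simp
  also have "\<dots> = (\<Prod>j\<in>UNIV. if d j = 0 then of_nat N else 0)"
    by (intro prod.cong refl sum_roots_of_unity[OF N d_lt])
  also have "\<dots> = (if n = n' then complex_of_real (real N ^ CARD('p)) else 0)"
  proof (cases "n = n'")
    case True
    then show ?thesis by (simp add: d_def)
  next
    case False
    then obtain j where "n$j \<noteq> n'$j" by (auto simp: vec_eq_iff)
    then have "d j \<noteq> 0" by (simp add: d_def)
    then show ?thesis using False by (intro trans[OF prod_zero]) auto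
  qed
  finally show ?thesis .
qed

lemma parseval_finite:
  fixes d :: "'n \<Rightarrow> complex" and e :: "'m \<Rightarrow> 'n \<Rightarrow> complex"
  assumes fin: "finite F" "finite M"
    and orth: "\<And>n n'. n \<in> F \<Longrightarrow> n' \<in> F \<Longrightarrow>
        (\<Sum>m\<in>M. e m n * cnj (e m n')) = (if n = n' then of_real K else 0)"
  shows "(\<Sum>m\<in>M. (cmod (\<Sum>n\<in>F. d n * e m n))^2) = K * (\<Sum>n\<in>F. (cmod (d n))^2)"
proof -
  have "complex_of_real (\<Sum>m\<in>M. (cmod (\<Sum>n\<in>F. d n * e m n))^2)
      = (\<Sum>m\<in>M. (\<Sum>n\<in>F. d n * e m n) * cnj (\<Sum>n\<in>F. d n * e m n))"
    unfolding of_real_sum by (intro sum.cong refl) (rule trans[OF complex_norm_square], simp)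
  also have "\<dots> = (\<Sum>m\<in>M. \<Sum>n\<in>F. \<Sum>n'\<in>F. d n * cnj (d n') * (e m n * cnj (e m n')))"
    by (simp add: cnj_sum sum_product mult_ac)
  also have "\<dots> = (\<Sum>n\<in>F. \<Sum>n'\<in>F. d n * cnj (d n') * (\<Sum>m\<in>M. e m n * cnj (e m n')))"
    by (simp add: sum_distrib_left sum.swap[of _ M])
  also have "\<dots> = (\<Sum>n\<in>F. \<Sum>n'\<in>F. d n * cnj (d n') * (if n = n' then of_real K else 0))"
    by (intro sum.cong refl) (simp add: orth)
  also have "\<dots> = (\<Sum>n\<in>F. d n * cnj (d n) * of_real K)"
    using fin by (simp add: if_distrib cong: if_cong)
  also have "\<dots> = complex_of_real (K * (\<Sum>n\<in>F. (cmod (d n))^2))"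
    unfolding of_real_mult of_real_sum sum_distrib_left
    by (intro sum.cong refl) (subst complex_norm_square, simp add: mult_ac)
  finally show ?thesis by (simp only: of_real_eq_iff)
qed

lemma exists_ge_mean:
  fixes f :: "'a \<Rightarrow> real"
  assumes "finite A" "A \<noteq> {}" "(\<Sum>a\<in>A. f a) = real (card A) * c"
  shows "\<exists>a\<in>A. c \<le> f a"
proof (rule ccontr)
  assume "\<not> (\<exists>a\<in>A. c \<le> f a)"
  then have "(\<Sum>a\<in>A. f a) < (\<Sum>a\<in>A. c)"
    using assms(1,2) by (intro sum_strict_mono) auto
  with assms(3) show False by simp
qed

definition torus :: "real^'p::finite \<Rightarrow> (complex^'p) set" where
  "torus r = {z. \<forall>j. norm (z$j) = r$j}"

lemma norm_mpow_torus: "z \<in> torus r \<Longrightarrow> norm (mpow z n) = mpow r n"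
  unfolding torus_def mpow_def by (simp add: prod_norm[symmetric] norm_power)

text \<open>A polynomial attains, somewhere on the torus, at least the l2-norm of its coefficients
  (weighted by r^n): average |P|^2 over the grid points z_j = r_j e^{2\<pi>i m_j/N} and use Parseval.\<close>
lemma polynomial_torus_l2_bound:
  fixes d :: "nat^'p::finite \<Rightarrow> complex" and r :: "real^'p"
  assumes r: "\<And>j. 0 \<le> r$j" and N: "0 < N"
  shows "\<exists>z\<in>torus r. (\<Sum>n\<in>Nbox N. (cmod (d n) * mpow r n)^2)
                        \<le> (cmod (\<Sum>n\<in>Nbox N. d n * mpow z n))^2"
proof -
  define F :: "(nat^'p) set" where "F = Nbox N"
  define zp :: "nat^'p \<Rightarrow> complex^'p" where
    "zp m = (\<chi> j. complex_of_real (r$j) * cis (2*pi*real (m$j)/real N))" for m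
  have zp_torus: "zp m \<in> torus r" for m
    unfolding torus_def zp_def using r by (simp add: norm_mult)
  have mpow_zp: "mpow (zp m) n = complex_of_real (mpow r n) * grid_char N m n" for m n
  proof -
    have "cis (2*pi*real (m$j)/real N) ^ (n$j) = cis (2*pi*real (m$j)*real (n$j)/real N)" for j
      by (subst Complex.DeMoivre) (simp add: field_simps)
    then show ?thesis
      unfolding mpow_def zp_def grid_char_def
      by (simp add: power_mult_distrib prod.distrib of_real_prod)
  qed
  have finF: "finite F" unfolding F_def by (rule finite_vbox) simp
  have cardF: "card F = N ^ CARD('p)"
    unfolding F_def by (subst card_vbox) simp_all
  have norm_coeff: "cmod (d n * complex_of_real (mpow r n)) = cmod (d n) * mpow r n" for n
  proof -
    have "0 \<le> mpow r n" unfolding mpow_def using r by (intro prod_nonneg) auto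
    then show ?thesis by (simp add: norm_mult)
  qed
  have "(\<Sum>m\<in>F. (cmod (\<Sum>n\<in>F. d n * mpow (zp m) n))^2)
        = real N ^ CARD('p) * (\<Sum>n\<in>F. (cmod (d n) * mpow r n)^2)"
    unfolding mpow_zp mult.assoc[symmetric] norm_coeff[symmetric]
    by (rule parseval_finite[OF finF finF]) (unfold F_def, rule grid_char_orthogonal[OF N])
  moreover have "F \<noteq> {}" using cardF N by auto
  moreover have "real (card F) = real N ^ CARD('p)" by (simp add: cardF)
  ultimately obtain m where "m \<in> F"
    "(\<Sum>n\<in>F. (cmod (d n) * mpow r n)^2) \<le> (cmod (\<Sum>n\<in>F. d n * mpow (zp m) n))^2"
    using exists_ge_mean[OF finF] by force
  then show ?thesis using zp_torus unfolding F_def by blast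
qed


section \<open>The l2 lower bound for the maximum modulus\<close>

definition mterm :: "real^'p::finite \<Rightarrow> nat^'p \<Rightarrow> real" where
  "mterm r n = coef n * mpow r n"

lemma mterm_prod: "mterm r n = (\<Prod>j\<in>UNIV. r$j ^ (n$j) / fact (n$j))"
proof -
  have "mterm r n = (\<Prod>j\<in>UNIV. r$j ^ (n$j)) / (\<Prod>j\<in>UNIV. fact (n$j))"
    unfolding mterm_def coef_def mpow_def by simp
  also have "\<dots> = (\<Prod>j\<in>UNIV. r$j ^ (n$j) / fact (n$j))"
    by (rule prod_dividef[symmetric])
  finally show ?thesis .
qed

lemma mterm_nonneg: "(\<And>j. 0 \<le> r$j) \<Longrightarrow> 0 \<le> mterm r n"
  unfolding mterm_prod by (intro prod_nonneg) auto

lemma coef_nonneg: "0 \<le> coef n"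
  unfolding coef_def by (intro divide_nonneg_pos prod_pos) auto

lemma exp_partial_sum_le: "0 \<le> (x::real) \<Longrightarrow> (\<Sum>k<N. x^k / fact k) \<le> exp x"
proof -
  assume x: "0 \<le> x"
  have sums: "(\<lambda>k. x^k / fact k) sums exp x"
    using exp_converges[of x] by (simp add: divide_inverse mult.commute)
  have "(\<Sum>k<N. x^k / fact k) \<le> suminf (\<lambda>k. x^k / fact k)"
    by (rule sum_le_suminf[OF sums_summable[OF sums]]) (use x in auto)
  then show ?thesis using sums_unique[OF sums] by simp
qed

text \<open>The terms are summable, with total mass at most \<Prod>_j e^{r_j}: the partial sums over
  boxes factorize into partial sums of the exponential series.\<close>
lemma mterm_summable:
  fixes r :: "real^'p::finite"
  assumes r: "\<And>j. 0 \<le> r$j"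
  shows "mterm r summable_on A"
proof -
  have "mterm r summable_on UNIV"
  proof (rule nonneg_bdd_above_summable_on)
    show "0 \<le> mterm r n" for n using mterm_nonneg r by blast
    show "bdd_above (sum (mterm r) ` {F. F \<subseteq> UNIV \<and> finite F})"
    proof (rule bdd_aboveI2)
      fix H :: "(nat^'p) set" assume "H \<in> {F. F \<subseteq> UNIV \<and> finite F}"
      then have H: "finite H" by auto
      define N where "N = Suc (\<Sum>n\<in>H. \<Sum>j\<in>UNIV. n$j)"
      have "sum (mterm r) H \<le> (\<Sum>n\<in>Nbox N. mterm r n)"
        using finite_subset_Nbox[OF H] mterm_nonneg[OF r]
        by (intro sum_mono2 finite_vbox) (auto simp: N_def)
      also have "\<dots> = (\<Prod>j\<in>UNIV. \<Sum>k<N. r$j ^ k / fact k)"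
        unfolding mterm_prod by (rule sum_vbox_prod) auto
      also have "\<dots> \<le> (\<Prod>j\<in>UNIV. exp (r$j))"
        using r by (intro prod_mono conjI sum_nonneg exp_partial_sum_le) auto
      finally show "sum (mterm r) H \<le> (\<Prod>j\<in>UNIV. exp (r$j))" .
    qed
  qed
  then show ?thesis using summable_on_subset by blast
qed

definition rcoef :: "(nat^'p::finite \<Rightarrow> real \<Rightarrow> real) \<Rightarrow> real \<Rightarrow> nat^'p \<Rightarrow> complex" where
  "rcoef \<omega> t n = exp (2 * pi * \<i> * complex_of_real (\<omega> n t)) * complex_of_real (coef n)"

lemma norm_rcoef: "norm (rcoef \<omega> t n) = coef n"
  using coef_nonneg[of n] by (simp add: rcoef_def norm_mult)

lemma rand_f_rcoef: "rand_f \<omega> z t = (\<Sum>\<^sub>\<infinity>n. rcoef \<omega> t n * mpow z n)"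
  unfolding rand_f_def rcoef_def ..

lemma rand_f_term_norm:
  "z \<in> torus r \<Longrightarrow> norm (rcoef \<omega> t n * mpow z n) = mterm r n"
  by (simp add: norm_mult norm_rcoef norm_mpow_torus mterm_def)

lemma rand_f_summable:
  assumes r: "\<And>j. 0 \<le> r$j" and z: "z \<in> torus r"
  shows "(\<lambda>n. rcoef \<omega> t n * mpow z n) summable_on A"
  using mterm_summable[OF r, of A] rand_f_term_norm[OF z]
  by (simp add: summable_on_iff_abs_summable_on_complex)

lemma rand_f_tail_bound:
  assumes r: "\<And>j. 0 \<le> r$j" and z: "z \<in> torus r" and F: "finite F"
  shows "norm (rand_f \<omega> z t - (\<Sum>n\<in>F. rcoef \<omega> t n * mpow z n)) \<le> infsum (mterm r) (UNIV - F)"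
proof -
  have "rand_f \<omega> z t - (\<Sum>n\<in>F. rcoef \<omega> t n * mpow z n)
        = (\<Sum>\<^sub>\<infinity>n\<in>UNIV - F. rcoef \<omega> t n * mpow z n)"
    unfolding rand_f_rcoef
    by (subst infsum_Diff[OF rand_f_summable[OF r z] rand_f_summable[OF r z]]) (simp_all add: F)
  also have "norm \<dots> \<le> (\<Sum>\<^sub>\<infinity>n\<in>UNIV - F. norm (rcoef \<omega> t n * mpow z n))"
    using mterm_summable[OF r] rand_f_term_norm[OF z] by (intro norm_infsum_bound) simp
  finally show ?thesis using rand_f_term_norm[OF z] by simp
qed

lemma norm_rand_f_le_max_mod:
  assumes r: "\<And>j. 0 \<le> r$j" and z: "z \<in> torus r"
  shows "norm (rand_f \<omega> z t) \<le> max_mod \<omega> r t"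
proof -
  have bound: "norm (rand_f \<omega> z' t) \<le> infsum (mterm r) UNIV" if "z' \<in> torus r" for z'
    using rand_f_tail_bound[OF r that, of "{}"] by simp
  show ?thesis
    unfolding max_mod_def using z bound unfolding torus_def
    by (intro cSUP_upper bdd_aboveI2) auto
qed

lemma mterm_tail_small:
  fixes r :: "real^'p::finite" and G :: "(nat^'p) set"
  assumes r: "\<And>j. 0 \<le> r$j" and G: "finite G" and \<delta>: "0 < \<delta>"
  obtains N where "0 < N" "G \<subseteq> Nbox N" "infsum (mterm r) (UNIV - Nbox N) \<le> \<delta>"
proof -
  obtain H where H: "finite H" "dist (sum (mterm r) H) (infsum (mterm r) UNIV) \<le> \<delta>"
    using infsum_finite_approximation[OF mterm_summable[OF r] \<delta>] by blast
  define N where "N = Suc (\<Sum>n\<in>H \<union> G. \<Sum>j\<in>UNIV. n$j)"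
  have HG: "H \<union> G \<subseteq> Nbox N" unfolding N_def using finite_subset_Nbox H(1) G by blast
  have fin: "finite (Nbox N :: (nat^'p) set)" by (rule finite_vbox) simp
  have "sum (mterm r) H \<le> sum (mterm r) (Nbox N)"
    using HG fin mterm_nonneg[OF r] by (intro sum_mono2) auto
  moreover have "infsum (mterm r) (UNIV - Nbox N) = infsum (mterm r) UNIV - sum (mterm r) (Nbox N)"
    by (subst infsum_Diff[OF mterm_summable[OF r] mterm_summable[OF r]]) (simp_all add: fin)
  ultimately have "infsum (mterm r) (UNIV - Nbox N) \<le> \<delta>"
    using H(2) by (simp add: dist_real_def)
  then show ?thesis using that HG unfolding N_def by blast
qed

text \<open>Apply the torus bound to the truncation of the series to a box containing G, whose
  neglected tail is at most \<delta>.\<close>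
lemma max_mod_ge_l2:
  fixes r :: "real^'p::finite" and G :: "(nat^'p) set"
  assumes r: "\<And>j. 0 \<le> r$j" and G: "finite G"
  shows "sqrt (\<Sum>n\<in>G. (mterm r n)^2) \<le> max_mod \<omega> r t"
proof (rule field_le_epsilon)
  fix \<delta> :: real assume \<delta>: "0 < \<delta>"
  obtain N where N: "0 < N" "G \<subseteq> Nbox N" and tail: "infsum (mterm r) (UNIV - Nbox N) \<le> \<delta>"
    using mterm_tail_small[OF r G \<delta>] by blast
  define P where "P z = (\<Sum>n\<in>Nbox N. rcoef \<omega> t n * mpow z n)" for z
  obtain z where z: "z \<in> torus r" and
    big: "(\<Sum>n\<in>Nbox N. (mterm r n)^2) \<le> (cmod (P z))^2"
    using polynomial_torus_l2_bound[OF r N(1), of "rcoef \<omega> t"]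
    unfolding P_def norm_rcoef mterm_def by blast
  have fin: "finite (Nbox N :: (nat^'p) set)" by (rule finite_vbox) simp
  have "sqrt (\<Sum>n\<in>G. (mterm r n)^2) \<le> sqrt (\<Sum>n\<in>Nbox N. (mterm r n)^2)"
    using N(2) fin by (subst real_sqrt_le_iff, intro sum_mono2) auto
  also have "\<dots> \<le> cmod (P z)"
    using big by (metis abs_norm_cancel real_sqrt_abs real_sqrt_le_iff)
  also have "\<dots> \<le> norm (rand_f \<omega> z t) + norm (rand_f \<omega> z t - P z)"
    using norm_triangle_ineq2[of "P z" "rand_f \<omega> z t"] by (simp add: norm_minus_commute)
  also have "\<dots> \<le> norm (rand_f \<omega> z t) + \<delta>"
    using rand_f_tail_bound[OF r z fin, of \<omega> t] tail unfolding P_def by simp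
  also have "\<dots> \<le> max_mod \<omega> r t + \<delta>"
    using norm_rand_f_le_max_mod[OF r z] by simp
  finally show "sqrt (\<Sum>n\<in>G. (mterm r n)^2) \<le> max_mod \<omega> r t + \<delta>" .
qed


section \<open>The terms x^m/m! of the exponential series\<close>

lemma pow_fact_mono_below:
  fixes x :: real
  assumes "i \<le> j" "real j \<le> x"
  shows "x^i / fact i \<le> x^j / fact j"
  using assms
proof (induction j)
  case 0 then show ?case by simp
next
  case (Suc j)
  show ?case
  proof (cases "i = Suc j")
    case True then show ?thesis by simp
  next
    case False
    then have ij: "i \<le> j" using Suc.prems by simp
    have x: "real (Suc j) \<le> x" using Suc.prems by simp
    have "x^i / fact i \<le> x^j / fact j" using Suc.IH ij x by simp
    also have "\<dots> \<le> x^j / fact j * (x / real (Suc j))"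
    proof -
      have "x^j / fact j * 1 \<le> x^j / fact j * (x / real (Suc j))"
        using x by (intro mult_left_mono) auto
      then show ?thesis by simp
    qed
    also have "\<dots> = x^(Suc j) / fact (Suc j)" by (simp add: field_simps)
    finally show ?thesis .
  qed
qed

lemma pow_fact_antimono_above:
  fixes x :: real
  assumes "k \<le> i" "x \<le> real k + 1" "0 \<le> x"
  shows "x^i / fact i \<le> x^k / fact k"
  using assms
proof (induction i)
  case 0 then show ?case by simp
next
  case (Suc i)
  show ?case
  proof (cases "k = Suc i")
    case True then show ?thesis by simp
  next
    case False
    then have ki: "k \<le> i" using Suc.prems by simp
    have "x^(Suc i) / fact (Suc i) = x^i / fact i * (x / real (Suc i))" by (simp add: field_simps)
    also have "\<dots> \<le> x^i / fact i * 1"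
      using Suc.prems ki by (intro mult_left_mono) (simp_all add: field_simps)
    also have "\<dots> \<le> x^k / fact k" using Suc.IH ki Suc.prems by simp
    finally show ?thesis .
  qed
qed

lemma pow_fact_shift:
  fixes x :: real
  assumes x: "0 < x"
  shows "x^j / fact j \<le> x^(j+d) / fact (j+d) * (real (j+d) / x)^d"
proof (induction d arbitrary: j)
  case 0 then show ?case by simp
next
  case (Suc d)
  have "x^j / fact j = x^(Suc j) / fact (Suc j) * (real (Suc j) / x)"
    using x by (simp add: divide_simps)
  also have "\<dots> \<le> x^(Suc j + d) / fact (Suc j + d) * (real (Suc j + d) / x)^d * (real (Suc j) / x)"
    by (rule mult_right_mono[OF Suc.IH]) (use x in simp)
  also have "\<dots> \<le> x^(Suc j + d) / fact (Suc j + d) * (real (Suc j + d) / x)^d * (real (Suc j + d) / x)"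
    by (rule mult_left_mono) (use x in \<open>auto intro!: divide_right_mono\<close>)
  also have "\<dots> = x^(j + Suc d) / fact (j + Suc d) * (real (j + Suc d) / x)^(Suc d)"
    by (simp add: field_simps)
  finally show ?case .
qed

lemma pow_fact_window:
  fixes x :: real and L k i :: nat
  assumes x: "1 \<le> x" and L: "real L ^ 2 \<le> x"
    and k: "nat \<lfloor>x\<rfloor> \<le> k" "k < nat \<lfloor>x\<rfloor> + L"
  shows "x^i / fact i \<le> exp 1 * (x^k / fact k)"
proof -
  define f where "f = nat \<lfloor>x\<rfloor>"
  have f1: "real f \<le> x" "x < real f + 1" unfolding f_def using x by linarith+
  have tk: "0 \<le> x^k / fact k" using x by simp
  show ?thesis
  proof (cases "k \<le> i")
    case True
    have "real f \<le> real k" using k(1) unfolding f_def by simp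
    then have "x^i / fact i \<le> x^k / fact k"
      using f1 x by (intro pow_fact_antimono_above[OF True]) auto
    also have "\<dots> = 1 * (x^k / fact k)" by simp
    also have "\<dots> \<le> exp 1 * (x^k / fact k)" by (rule mult_right_mono) (use tk in auto)
    finally show ?thesis .
  next
    case False
    define j where "j = max i f"
    have jk: "j \<le> k" using False k unfolding j_def f_def by auto
    have "x^i / fact i \<le> x^j / fact j"
      unfolding j_def using pow_fact_mono_below[OF _ f1(1)] by (cases "i \<le> f") auto
    also have "\<dots> \<le> x^(j + (k-j)) / fact (j + (k-j)) * (real (j + (k-j)) / x)^(k-j)"
      by (rule pow_fact_shift) (use x in simp)
    also have "\<dots> = x^k / fact k * (real k / x)^(k-j)" using jk by simp
    also have "\<dots> \<le> x^k / fact k * exp 1"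
    proof (rule mult_left_mono[OF _ tk])
      have kj: "k - j \<le> L" using k jk unfolding j_def f_def by auto
      have "real k \<le> x + real L" using k(2) f1 unfolding f_def by linarith
      then have kx: "real k / x \<le> 1 + real L / x"
        using x by (simp add: field_simps)
      have "(real k / x)^(k-j) \<le> (1 + real L / x)^(k-j)"
        by (rule power_mono[OF kx]) (use x in simp)
      also have "\<dots> \<le> (1 + real L / x)^L" by (rule power_increasing[OF kj]) (use x in simp)
      also have "\<dots> \<le> (exp (real L / x))^L" by (rule power_mono) (use x in auto)
      also have "\<dots> = exp (real L * real L / x)" by (simp add: exp_of_nat_mult[symmetric])
      also have "\<dots> \<le> exp 1" using L x by (simp add: power2_eq_square)
      finally show "(real k / x)^(k-j) \<le> exp 1" .
    qed
    finally show ?thesis by (simp add: mult.commute)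
  qed
qed

lemma pow_fact_le_exp: "0 \<le> (x::real) \<Longrightarrow> x^k / fact k \<le> exp x"
  using member_le_sum[of k "{..<Suc k}" "\<lambda>i. x^i / fact i"] exp_partial_sum_le[of x "Suc k"]
  by simp


section \<open>The maximal term\<close>

lemma max_term_eq_Sup: "max_term r = (SUP n. mterm r n)"
  unfolding max_term_def mterm_def by (simp add: abs_of_nonneg coef_nonneg)

lemma mterm_le_exp_sum:
  assumes r: "\<And>j. 0 \<le> r$j"
  shows "mterm r n \<le> exp (\<Sum>j\<in>UNIV. r$j)"
proof -
  have "mterm r n \<le> (\<Prod>j\<in>UNIV. exp (r$j))"
    unfolding mterm_prod using r pow_fact_le_exp by (intro prod_mono) auto
  then show ?thesis by (simp add: exp_sum)
qed

lemma mterm_le_max_term: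
  assumes r: "\<And>j. 0 \<le> r$j"
  shows "mterm r n \<le> max_term r"
  unfolding max_term_eq_Sup using mterm_le_exp_sum[OF r]
  by (intro cSUP_upper bdd_aboveI2) auto

lemma max_term_le_exp_sum:
  assumes r: "\<And>j. 0 \<le> r$j"
  shows "max_term r \<le> exp (\<Sum>j\<in>UNIV. r$j)"
  unfolding max_term_eq_Sup using mterm_le_exp_sum[OF r] by (intro cSUP_least) auto

definition window :: "real^'p::finite \<Rightarrow> nat \<Rightarrow> (nat^'p) set" where
  "window r L = vbox (\<lambda>j. {nat \<lfloor>r$j\<rfloor>..<nat \<lfloor>r$j\<rfloor> + L})"

lemma max_term_le_window_term:
  fixes r :: "real^'p::finite"
  assumes r: "\<And>j. 1 \<le> r$j" and L: "\<And>j. real L ^ 2 \<le> r$j" and n: "n \<in> window r L"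
  shows "max_term r \<le> exp (real CARD('p)) * mterm r n"
  unfolding max_term_eq_Sup
proof (rule cSUP_least)
  fix n'
  have "mterm r n' \<le> (\<Prod>j\<in>UNIV. exp 1 * (r$j ^ (n$j) / fact (n$j)))"
    unfolding mterm_prod
  proof (rule prod_mono, rule conjI)
    fix j
    show "0 \<le> r$j ^ (n'$j) / fact (n'$j)" using r[of j] by simp
    show "r$j ^ (n'$j) / fact (n'$j) \<le> exp 1 * (r$j ^ (n$j) / fact (n$j))"
      using n pow_fact_window[OF r[of j] L[of j]] unfolding window_def vbox_def by auto
  qed
  also have "\<dots> = exp (real CARD('p)) * mterm r n"
    unfolding mterm_prod prod.distrib by (simp add: exp_of_nat_mult[symmetric])
  finally show "mterm r n' \<le> exp (real CARD('p)) * mterm r n" .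
qed simp

lemma max_mod_ge_window:
  fixes r :: "real^'p::finite"
  assumes r: "\<And>j. 1 \<le> r$j" and L: "\<And>j. real L ^ 2 \<le> r$j"
  shows "sqrt (real L ^ CARD('p)) / exp (real CARD('p)) * max_term r \<le> max_mod \<omega> r t"
proof -
  define c where "c = max_term r / exp (real CARD('p))"
  have r0: "0 \<le> r$j" for j using r[of j] by linarith
  have c0: "0 \<le> c" unfolding c_def using mterm_le_max_term[OF r0] mterm_nonneg[OF r0]
    by (meson divide_nonneg_pos exp_gt_zero order.trans)
  have fin: "finite (window r L)" unfolding window_def by (rule finite_vbox) simp
  have card: "card (window r L) = L ^ CARD('p)"
    unfolding window_def by (subst card_vbox) simp_all
  have "real L ^ CARD('p) * c^2 = (\<Sum>n\<in>window r L. c^2)" by (simp add: card)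
  also have "\<dots> \<le> (\<Sum>n\<in>window r L. (mterm r n)^2)"
  proof (rule sum_mono)
    fix n assume "n \<in> window r L"
    then have "c \<le> mterm r n"
      using max_term_le_window_term[OF r L] unfolding c_def by (simp add: divide_le_eq mult.commute)
    then show "c^2 \<le> (mterm r n)^2" using c0 by (rule power_mono)
  qed
  finally have "sqrt (real L ^ CARD('p)) * c \<le> sqrt (\<Sum>n\<in>window r L. (mterm r n)^2)"
    using c0 by (metis real_sqrt_le_mono real_sqrt_mult real_sqrt_abs abs_of_nonneg)
  also have "\<dots> \<le> max_mod \<omega> r t" by (rule max_mod_ge_l2[OF r0 fin])
  finally show ?thesis unfolding c_def by simp
qed


section \<open>Estimates on a dyadic shell s < r_j < 2s\<close>

lemma max_term_ge_shell:
  fixes r :: "real^'p::finite"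
  assumes s: "1 \<le> s" and rs: "\<And>j. s < r$j"
  shows "s \<le> max_term r"
proof -
  have r0: "0 \<le> r$j" for j using rs[of j] s by linarith
  have "s \<le> s ^ CARD('p)" using s power_increasing[of 1 "CARD('p)" s] by (simp add: Suc_leI)
  also have "\<dots> = (\<Prod>j\<in>(UNIV::'p set). s)" by simp
  also have "\<dots> \<le> (\<Prod>j\<in>UNIV. r$j)"
    by (rule prod_mono) (use s rs in \<open>auto intro: less_imp_le\<close>)
  also have "\<dots> = mterm r (\<chi> j. 1)" unfolding mterm_prod by simp
  also have "\<dots> \<le> max_term r" by (rule mterm_le_max_term[OF r0])
  finally show ?thesis .
qed

lemma ln_max_term_le_shell:
  fixes r :: "real^'p::finite"
  assumes s: "1 \<le> s" and rs: "\<And>j. s < r$j" "\<And>j. r$j < 2 * s"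
  shows "ln (max_term r) \<le> 2 * real CARD('p) * s"
proof -
  have r0: "0 \<le> r$j" for j using rs(1)[of j] s by linarith
  have "0 < max_term r" using max_term_ge_shell[OF s rs(1)] s by linarith
  then have "ln (max_term r) \<le> (\<Sum>j\<in>UNIV. r$j)"
    using max_term_le_exp_sum[OF r0] by (metis ln_exp ln_le_cancel_iff exp_gt_zero)
  also have "\<dots> \<le> (\<Sum>j\<in>(UNIV::'p set). 2 * s)"
    by (rule sum_mono) (use rs(2) in \<open>auto intro: less_imp_le\<close>)
  finally show ?thesis by simp
qed

lemma max_mod_ge_shell:
  fixes r :: "real^'p::finite"
  assumes s: "4 \<le> s" and rs: "\<And>j. s < r$j"
  shows "sqrt (real (nat \<lfloor>sqrt s\<rfloor>) ^ CARD('p)) / exp (real CARD('p)) * max_term r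
           \<le> max_mod \<omega> r t"
proof (rule max_mod_ge_window)
  show "1 \<le> r$j" for j using rs[of j] s by linarith
  have "real (nat \<lfloor>sqrt s\<rfloor>) ^ 2 \<le> (sqrt s)^2"
    using s by (intro power_mono) auto
  then show "real (nat \<lfloor>sqrt s\<rfloor>) ^ 2 \<le> r$j" for j
    using rs[of j] s by simp
qed

lemma floor_sqrt_power_ge:
  assumes s: "4 \<le> s"
  shows "(s / 4) powr (real p / 4) \<le> sqrt (real (nat \<lfloor>sqrt s\<rfloor>) ^ p)"
proof -
  define L where "L = real (nat \<lfloor>sqrt s\<rfloor>)"
  have sq2: "2 \<le> sqrt s" using s real_sqrt_le_mono[of 4 s] by simp
  have Lb: "sqrt s / 2 \<le> L" unfolding L_def using sq2 by linarith
  have "(s / 4) powr (real p / 4) = (sqrt s / 2) powr (real p / 2)"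
  proof -
    have "sqrt s / 2 = (s / 4) powr (1/2)"
      using s by (simp add: powr_half_sqrt real_sqrt_divide)
    then show ?thesis by (simp add: powr_powr)
  qed
  also have "\<dots> \<le> L powr (real p / 2)"
    by (rule powr_mono2) (use Lb sq2 s in auto)
  also have "\<dots> = sqrt (L ^ p)"
    using Lb sq2 by (simp add: powr_half_sqrt_powr powr_realpow)
  finally show ?thesis unfolding L_def .
qed

text \<open>Pure arithmetic: for s large enough, (ln \<mu>)^{p/4-\<epsilon>} e^p \<le> (s/4)^{p/4} whenever
  1 \<le> ln \<mu> \<le> 2ps.  The exponent loss \<epsilon> absorbs the constants.\<close>
lemma log_power_le_shell_power:
  fixes p :: nat and \<epsilon> s l :: real
  assumes p: "1 \<le> p" and e: "0 < \<epsilon>" and s1: "4 * exp 4 \<le> s"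
    and s2: "(8 * real p) powr (real p / 4) * exp (real p) \<le> s powr \<epsilon>"
    and l: "1 \<le> l" "l \<le> 2 * real p * s"
  shows "l powr (real p / 4 - \<epsilon>) * exp (real p) \<le> (s / 4) powr (real p / 4)"
proof (cases "real p / 4 - \<epsilon> \<le> 0")
  case True
  have "l powr (real p / 4 - \<epsilon>) \<le> 1" using powr_mono[OF True l(1)] l(1) by simp
  then have "l powr (real p / 4 - \<epsilon>) * exp (real p) \<le> exp (real p)"
    by (simp add: mult_le_cancel_right1)
  also have "exp (real p) = exp 4 powr (real p / 4)" by (simp add: exp_powr_real)
  also have "\<dots> \<le> (s / 4) powr (real p / 4)" by (rule powr_mono2) (use s1 in auto)
  finally show ?thesis .
next
  case False
  define a where "a = real p / 4 - \<epsilon>"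
  have a0: "0 \<le> a" using False unfolding a_def by simp
  have s0: "0 < s" using s1 exp_gt_zero[of 4] by linarith
  have p0: "0 < real p" using p by simp
  have "l powr a \<le> (2 * real p * s) powr a"
    by (rule powr_mono2[OF a0]) (use l in auto)
  also have "\<dots> = (2 * real p) powr a * s powr a" by (simp add: powr_mult)
  also have "\<dots> \<le> (2 * real p) powr (real p / 4) * s powr a"
    by (intro mult_right_mono powr_mono) (use e p in \<open>auto simp: a_def\<close>)
  also have "s powr a = s powr (real p / 4) / s powr \<epsilon>" unfolding a_def by (rule powr_diff)
  finally have "l powr a \<le> (2 * real p) powr (real p / 4) * s powr (real p / 4) / s powr \<epsilon>"
    by simp
  then have "l powr a * exp (real p)
      \<le> (2 * real p) powr (real p / 4) * s powr (real p / 4) / s powr \<epsilon> * exp (real p)"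
    by (rule mult_right_mono) simp
  also have "\<dots> = (2 * real p) powr (real p / 4) * exp (real p) * s powr (real p / 4) / s powr \<epsilon>"
    by simp
  also have "\<dots> \<le> (2 * real p) powr (real p / 4) * exp (real p) * s powr (real p / 4)
                    / ((8 * real p) powr (real p / 4) * exp (real p))"
    using s2 p0 s0 by (intro divide_left_mono mult_pos_pos) auto
  also have "\<dots> = s powr (real p / 4) / 4 powr (real p / 4)"
    using p0 by (simp add: powr_mult[symmetric] field_simps)
  also have "\<dots> = (s / 4) powr (real p / 4)" by (simp add: powr_divide)
  finally show ?thesis unfolding a_def .
qed

lemma max_mod_lower_on_shell:
  fixes r :: "real^'p::finite"
  defines "p \<equiv> CARD('p)"
  assumes e: "0 < \<epsilon>" and s1: "4 * exp 4 \<le> s"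
    and s2: "(8 * real p) powr (real p / 4) * exp (real p) \<le> s powr \<epsilon>"
    and rs: "\<And>j. s < r$j" "\<And>j. r$j < 2 * s"
  shows "max_term r * ln (max_term r) powr (real p / 4 - \<epsilon>) \<le> max_mod \<omega> r t"
proof -
  have exp4: "exp 1 \<le> exp (4::real)" "1 \<le> exp (4::real)" by simp_all
  have s4: "4 \<le> s" using s1 exp4 by linarith
  have p: "1 \<le> p" unfolding p_def by (simp add: Suc_leI)
  have \<mu>: "s \<le> max_term r" by (rule max_term_ge_shell) (use s4 rs in auto)
  have "exp 1 \<le> max_term r" using \<mu> s1 exp4 by linarith
  moreover have "0 < max_term r" using \<mu> s4 by linarith
  ultimately have l1: "1 \<le> ln (max_term r)" by (simp add: ln_ge_iff)
  have l2: "ln (max_term r) \<le> 2 * real p * s"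
    unfolding p_def by (rule ln_max_term_le_shell) (use s4 rs in auto)
  define \<Lambda> where "\<Lambda> = sqrt (real (nat \<lfloor>sqrt s\<rfloor>) ^ p) / exp (real p)"
  have "ln (max_term r) powr (real p / 4 - \<epsilon>) \<le> \<Lambda>"
    using log_power_le_shell_power[OF p e s1 s2 l1 l2] floor_sqrt_power_ge[OF s4, of p]
    unfolding \<Lambda>_def by (simp add: field_simps)
  then have "max_term r * ln (max_term r) powr (real p / 4 - \<epsilon>) \<le> \<Lambda> * max_term r"
    using \<mu> s4 by (subst mult.commute, intro mult_right_mono) auto
  also have "\<dots> \<le> max_mod \<omega> r t"
    unfolding \<Lambda>_def p_def by (rule max_mod_ge_shell) (use s4 rs in auto)
  finally show ?thesis .
qed


section \<open>Dyadic shells and their logarithmic measure\<close>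

definition dyadic_shell :: "nat \<Rightarrow> (real^'p::finite) set" where
  "dyadic_shell k = box (\<chi> j. 2^k) (\<chi> j. 2^(k+1))"

lemma mem_dyadic_shell: "r \<in> dyadic_shell k \<longleftrightarrow> (\<forall>j. 2^k < r$j \<and> r$j < 2^(k+1))"
  unfolding dyadic_shell_def mem_box_cart by simp

lemma dyadic_shell_disjoint: "disjoint_family (dyadic_shell :: nat \<Rightarrow> (real^'p::finite) set)"
  unfolding disjoint_family_on_def
proof (intro ballI impI)
  fix k k' :: nat assume ne: "k \<noteq> k'"
  show "dyadic_shell k \<inter> (dyadic_shell k' :: (real^'p) set) = {}"
  proof (rule ccontr)
    assume "dyadic_shell k \<inter> (dyadic_shell k' :: (real^'p) set) \<noteq> {}"
    then obtain r :: "real^'p" where "r \<in> dyadic_shell k" "r \<in> dyadic_shell k'" by blast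
    then have a: "2^k < r$j" "r$j < 2^(k+1)" "2^k' < r$j" "r$j < (2::real)^(k'+1)" for j
      unfolding mem_dyadic_shell by auto
    have "(2::real)^(min k k' + 1) \<le> 2^(max k k')" using ne by (intro power_increasing) auto
    then show False using a[of undefined] by (cases "k \<le> k'") (auto simp: min_def max_def)
  qed
qed

definition log_weight :: "real^'p::finite \<Rightarrow> ennreal" where
  "log_weight r = ennreal (\<Prod>j\<in>UNIV. 1 / (r $ j))"

text \<open>On Lebesgue measurable sets the logarithmic measure is a measure, which gives additivity.\<close>
lemma log_measure_eq_emeasure:
  assumes "A \<in> sets lebesgue"
  shows "log_measure A = emeasure (density lebesgue log_weight) A"
proof -
  have "log_weight \<in> borel_measurable (lborel :: (real^'p) measure)"
    unfolding log_weight_def by measurable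
  then have "log_weight \<in> borel_measurable (lebesgue :: (real^'p) measure)"
    by (rule measurable_completion)
  then have "emeasure (density lebesgue log_weight) A = (\<integral>\<^sup>+ r. log_weight r * indicator A r \<partial>lebesgue)"
    using assms by (rule emeasure_density)
  then show ?thesis unfolding log_measure_def log_weight_def by (simp add: mult.commute)
qed

lemma dyadic_shell_sets: "dyadic_shell k \<in> sets lebesgue"
  unfolding dyadic_shell_def by (intro sets_completionI_sets) simp

lemma emeasure_dyadic_shell:
  "emeasure lebesgue (dyadic_shell k :: (real^'p::finite) set) = ennreal ((2^k)^CARD('p))"
proof -
  have "dyadic_shell k \<in> sets (lborel :: (real^'p) measure)" unfolding dyadic_shell_def by simp
  then have "emeasure lebesgue (dyadic_shell k :: (real^'p) set) = emeasure lborel (dyadic_shell k :: (real^'p) set)"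
    by simp
  also have "\<dots> = ennreal (\<Prod>b\<in>Basis. ((\<chi> j. 2^(k+1)) - (\<chi> j. 2^k) :: real^'p) \<bullet> b)"
    unfolding dyadic_shell_def by (subst emeasure_lborel_box) (auto simp: Basis_vec_def inner_axis)
  also have "(\<Prod>b\<in>Basis. ((\<chi> j. 2^(k+1)) - (\<chi> j. 2^k) :: real^'p) \<bullet> b) = (\<Prod>b\<in>(Basis::(real^'p) set). 2^k)"
    by (intro prod.cong refl) (auto simp: Basis_vec_def inner_axis)
  finally show ?thesis by simp
qed

text \<open>Every dyadic shell has logarithmic measure at least 2^{-p}: the weight is \<ge> 2^{-(k+1)p}
  on a cube of volume 2^{kp}.\<close>
lemma log_measure_dyadic_shell:
  "ennreal ((1/2)^CARD('p)) \<le> log_measure (dyadic_shell k :: (real^'p::finite) set)"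
proof -
  define c where "c = (1 / 2^(k+1) :: real)^CARD('p)"
  have weight: "ennreal c * indicator (dyadic_shell k) r \<le> indicator (dyadic_shell k) r * log_weight r"
    for r :: "real^'p"
  proof (cases "r \<in> dyadic_shell k")
    case True
    then have rj: "2^k < r$j" "r$j < 2^(k+1)" for j unfolding mem_dyadic_shell by auto
    have r0: "0 < r$j" for j using rj(1)[of j] zero_less_power[of "2::real" k] by linarith
    have "c = (\<Prod>j\<in>(UNIV::'p set). 1 / 2^(k+1))" unfolding c_def by simp
    also have "\<dots> \<le> (\<Prod>j\<in>UNIV. 1 / (r$j))"
      using rj r0 by (intro prod_mono conjI divide_left_mono) (auto intro: less_imp_le)
    finally show ?thesis using True unfolding log_weight_def by (simp add: ennreal_leI)
  qed simp
  have "ennreal ((1/2)^CARD('p)) = ennreal c * emeasure lebesgue (dyadic_shell k :: (real^'p) set)"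
    unfolding emeasure_dyadic_shell c_def
    by (simp add: ennreal_mult'[symmetric] power_mult_distrib[symmetric])
  also have "\<dots> = (\<integral>\<^sup>+ r. ennreal c * indicator (dyadic_shell k :: (real^'p) set) r \<partial>lebesgue)"
    by (rule nn_integral_cmult_indicator[symmetric]) (rule dyadic_shell_sets)
  also have "\<dots> \<le> log_measure (dyadic_shell k :: (real^'p) set)"
    unfolding log_measure_def log_weight_def[symmetric] by (rule nn_integral_mono) (rule weight)
  finally show ?thesis .
qed

definition shells_from :: "nat \<Rightarrow> (real^'p::finite) set" where
  "shells_from K = (\<Union>k\<in>{K..}. dyadic_shell k)"

lemma shells_from_sets: "(shells_from K :: (real^'p::finite) set) \<in> sets lebesgue"
proof -
  have "open (shells_from K :: (real^'p) set)" unfolding shells_from_def dyadic_shell_def by (intro open_UN ballI open_box)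
  then show ?thesis by (intro sets_completionI_sets) (simp add: borel_open)
qed

lemma shells_from_positive: "shells_from K \<subseteq> {r :: real^'p::finite. \<forall>j. 0 < r $ j}"
proof (intro subsetI CollectI allI)
  fix r j assume "r \<in> shells_from K"
  then obtain k where "r \<in> dyadic_shell k" unfolding shells_from_def by blast
  then have "2^k < r$j" unfolding mem_dyadic_shell by blast
  then show "0 < r$j" using zero_less_power[of "2::real" k] by linarith
qed

lemma dyadic_shell_subset_Bset:
  fixes R :: "real^'p::finite"
  assumes k: "(\<Sum>j\<in>UNIV. \<bar>R$j\<bar>) < 2^k"
  shows "dyadic_shell k \<subseteq> Bset R"
proof (intro subsetI, unfold Bset_def, intro CollectI allI)
  fix r :: "real^'p" and j assume r: "r \<in> dyadic_shell k"
  have "R$j \<le> (\<Sum>j\<in>UNIV. \<bar>R$j\<bar>)"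
    by (rule order.trans[OF abs_ge_self member_le_sum[of j UNIV "\<lambda>j. \<bar>R$j\<bar>"]]) auto
  also have "\<dots> < 2^k" by (rule k)
  also have "\<dots> < r$j" using r unfolding mem_dyadic_shell by auto
  finally show "R$j \<le> r$j" by simp
qed

text \<open>Infinitely many shells lie in B(R), each of logarithmic measure at least 2^{-p}.\<close>
lemma log_measure_shells_from:
  fixes R :: "real^'p::finite"
  shows "log_measure (shells_from K \<inter> Bset R) = \<infinity>"
proof -
  obtain n where n: "(\<Sum>j\<in>UNIV. \<bar>R$j\<bar>) < 2^n" using real_arch_pow[of 2] by auto
  define S where "S i = (dyadic_shell (n + K + i) :: (real^'p) set)" for i
  have S_sub: "S i \<subseteq> shells_from K \<inter> Bset R" for i
  proof -
    have "(2::real)^n \<le> 2^(n + K + i)" by (intro power_increasing) auto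
    then have "(\<Sum>j\<in>UNIV. \<bar>R$j\<bar>) < 2^(n + K + i)" using n by linarith
    then have in_B: "S i \<subseteq> Bset R" unfolding S_def by (rule dyadic_shell_subset_Bset)
    have "S i \<subseteq> shells_from K" unfolding S_def shells_from_def by (intro UN_upper) simp
    then show ?thesis using in_B by (rule Int_greatest)
  qed
  have S_disj: "disjoint_family S"
    unfolding disjoint_family_on_def S_def
    by (intro ballI impI disjoint_family_onD[OF dyadic_shell_disjoint]) auto
  have S_sets: "S i \<in> sets lebesgue" for i unfolding S_def by (rule dyadic_shell_sets)
  have "\<top> = (\<Sum>i. ennreal ((1/2)^CARD('p)))"
    by (rule summable_iff_suminf_neq_top[symmetric]) (auto simp: summable_const_iff)
  also have "\<dots> \<le> (\<Sum>i. log_measure (S i))"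
    unfolding S_def by (intro suminf_le summableI log_measure_dyadic_shell)
  also have "\<dots> = (\<Sum>i. emeasure (density lebesgue log_weight) (S i))"
    using S_sets by (simp only: log_measure_eq_emeasure)
  also have "\<dots> = emeasure (density lebesgue log_weight) (\<Union>i. S i)"
    using S_disj S_sets by (intro suminf_emeasure) auto
  also have "\<dots> = log_measure (\<Union>i. S i)"
    using S_sets by (intro log_measure_eq_emeasure[symmetric] sets.countable_UN) auto
  also have "\<dots> \<le> log_measure (shells_from K \<inter> Bset R)"
    unfolding log_measure_def
  proof (intro nn_integral_mono mult_right_mono)
    show "indicator (\<Union>i. S i) r \<le> (indicator (shells_from K \<inter> Bset R) r :: ennreal)" for r
      using S_sub by (auto split: split_indicator)
  qed simp
  finally show ?thesis by (simp add: top_unique)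
qed


lemma large_dyadic_levels:
  fixes C \<epsilon> :: real
  assumes C: "0 < C" and e: "0 < \<epsilon>"
  shows "\<exists>K. \<forall>k\<ge>K. 4 * exp 4 \<le> (2::real)^k \<and> C \<le> (2^k) powr \<epsilon>"
proof -
  obtain K where K: "max (4 * exp 4) (C powr (1/\<epsilon>)) < (2::real)^K"
    using real_arch_pow[of 2 "max (4 * exp 4) (C powr (1/\<epsilon>))"] by auto
  have "4 * exp 4 \<le> (2::real)^k \<and> C \<le> (2^k) powr \<epsilon>" if "K \<le> k" for k
  proof -
    have sK: "(2::real)^K \<le> 2^k" using that by (intro power_increasing) auto
    have "C = (C powr (1/\<epsilon>)) powr \<epsilon>" using C e by (simp add: powr_powr)
    also have "\<dots> \<le> (2^k) powr \<epsilon>"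
    proof (rule powr_mono2)
      have "C powr (1/\<epsilon>) < 2^K" using K by simp
      then show "C powr (1/\<epsilon>) \<le> 2^k" using sK by linarith
    qed (use e in auto)
    moreover have "4 * exp 4 < (2::real)^K" using K by simp
    ultimately show ?thesis using sK by linarith
  qed
  then show ?thesis by (intro exI[of _ K] allI impI)
qed


text \<open>The theorem.  The exceptional set is empty: the estimate holds for every t, and
  E(\<epsilon>) is the union of all dyadic shells beyond a level K depending only on p and \<epsilon>.\<close>
theorem theorem3p1:
  fixes \<omega> :: "nat^'p::finite \<Rightarrow> real \<Rightarrow> real"
  assumes meas: "\<And>n. \<omega> n \<in> borel_measurable steinhaus"
    and indep: "prob_space.indep_vars steinhaus (\<lambda>_. borel) \<omega> UNIV"
    and unif: "\<And>n. distr steinhaus lborel (\<omega> n) = uniform_measure lborel {0..1}"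
  shows "\<forall>\<epsilon>>0. AE t in steinhaus. \<exists>E.
           E \<in> sets lebesgue \<and> E \<subseteq> {r. \<forall>j. 0 < r $ j} \<and>
           (\<forall>R. (\<forall>j. 0 < R $ j) \<longrightarrow> log_measure (E \<inter> Bset R) = \<infinity>) \<and>
           (\<forall>r\<in>E. max_mod \<omega> r t \<ge>
               max_term r * (ln (max_term r)) powr (real CARD('p) / 4 - \<epsilon>))"
proof (intro allI impI)
  fix \<epsilon> :: real assume e: "0 < \<epsilon>"
  define p where "p = real CARD('p)"
  have "0 < 8 * p" unfolding p_def by simp
  then have C: "0 < (8 * p) powr (p / 4) * exp p" by simp
  obtain K where K: "\<forall>k\<ge>K. 4 * exp 4 \<le> (2::real)^k \<and> (8 * p) powr (p / 4) * exp p \<le> (2^k) powr \<epsilon>"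
    using large_dyadic_levels[OF C e] ..
  have bound: "max_term r * ln (max_term r) powr (p / 4 - \<epsilon>) \<le> max_mod \<omega> r t"
    if r: "r \<in> shells_from K" for r t
  proof -
    obtain k where k: "K \<le> k" "r \<in> dyadic_shell k" using r unfolding shells_from_def by blast
    show ?thesis unfolding p_def
      by (rule max_mod_lower_on_shell[OF e, of "2^k"])
        (use K[rule_format, OF k(1)] k(2) in \<open>auto simp: p_def mem_dyadic_shell\<close>)
  qed
  show "AE t in steinhaus. \<exists>E.
           E \<in> sets lebesgue \<and> E \<subseteq> {r. \<forall>j. 0 < r $ j} \<and>
           (\<forall>R. (\<forall>j. 0 < R $ j) \<longrightarrow> log_measure (E \<inter> Bset R) = \<infinity>) \<and>
           (\<forall>r\<in>E. max_mod \<omega> r t \<ge>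
               max_term r * (ln (max_term r)) powr (real CARD('p) / 4 - \<epsilon>))"
    using shells_from_sets shells_from_positive log_measure_shells_from bound
    unfolding p_def by (intro AE_I2 exI[of _ "shells_from K"]) auto
qed

end
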